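(* Let $d>1$ be a non-integer rational number and $\mu\ge\lceil d\rceil-1$ an integer. Then for every relation $R\in\{\le,<,\ge,>,=,\neq\}$, the discounted-sum comparator with discount factor $d$ for $R$ over the alphabet $\{0,\dots,\mu\}\times\{0,\dots,\mu\}$ — i.e. the set of pairs $(A,B)$ of sequences in $\{0,\dots,\mu\}^\omega$ with $\mathrm{DS}(A,d)\,R\,\mathrm{DS}(B,d)$ — is not $\omega$-regular (not accepted by any B\"uchi automaton reading $A$ and $B$ synchronously).
   Context: $\mathrm{DS}(A,d)=\sum_{i\ge0}A[i]/d^i$ for an infinite sequence $A$ and $d>1$. *)

theory Defs
  imports Complex_Main
begin

definition DS :: "(nat \<Rightarrow> nat) \<Rightarrow> real \<Rightarrow> real" where
  "DS A d = (\<Sum>i. real (A i) / d ^ i)"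

definition buchi_accepts ::
  "nat set \<Rightarrow> 'a set \<Rightarrow> nat set \<Rightarrow> (nat \<times> 'a \<times> nat) set \<Rightarrow> nat set \<Rightarrow> (nat \<Rightarrow> 'a) \<Rightarrow> bool" where
  "buchi_accepts Q Al I delta F w \<longleftrightarrow>
     (\<exists>r :: nat \<Rightarrow> nat. r 0 \<in> I \<and> (\<forall>i. (r i, w i, r (Suc i)) \<in> delta)
        \<and> (\<exists>\<^sub>\<infinity>i. r i \<in> F))"

definition omega_regular :: "'a set \<Rightarrow> ((nat \<Rightarrow> 'a) set) \<Rightarrow> bool" where
  "omega_regular Al L \<longleftrightarrow>
     (\<exists>Q I delta F. finite Q \<and> I \<subseteq> Q \<and> F \<subseteq> Q \<and> delta \<subseteq> Q \<times> Al \<times> Q \<and>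
        L = {w. (\<forall>i. w i \<in> Al) \<and> buchi_accepts Q Al I delta F w})"

definition DS_comparator :: "nat \<Rightarrow> real \<Rightarrow> (real \<Rightarrow> real \<Rightarrow> bool) \<Rightarrow> (nat \<Rightarrow> nat \<times> nat) set" where
  "DS_comparator mu d R =
     {w. (\<forall>i. w i \<in> {0..mu} \<times> {0..mu}) \<and> R (DS (fst \<circ> w) d) (DS (snd \<circ> w) d)}"

end

theory Submission imports Defs begin

text \<open>Expand 1 greedily in base \<open>d\<close> with digits \<open>0..\<lfloor>d\<rfloor>\<close>, and let \<open>B\<close> be the digit sequence,
  so that \<open>DS(B, d) = 1 = DS(A, d)\<close> for \<open>A = 1, 0, 0, \<dots>\<close>. Replacing the part of \<open>B\<close> after position
  \<open>m\<close> by its part after position \<open>n\<close> changes \<open>DS\<close> by \<open>(x\<^sub>n - x\<^sub>m) / d\<^sup>m\<close>, where \<open>x\<^sub>k\<close> is the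
  \<open>k\<close>-th greedy remainder. For \<open>d = p/q\<close> in lowest terms with \<open>q > 1\<close>, \<open>x\<^sub>k\<close> has exact denominator
  \<open>q\<^sup>k\<close>, so the remainders are pairwise distinct. A Buchi automaton has only finitely many sets of
  states reachable after reading a prefix, so it cannot distinguish two prefixes of \<open>(A, B)\<close>, of
  lengths \<open>m + 1 < n + 1\<close>, say. Exchanging these prefixes in front of the suffixes after \<open>m\<close> and
  after \<open>n\<close> moves \<open>DS(B, d)\<close> strictly above 1 in one case and strictly below 1 in the other,
  while \<open>DS(A, d) = 1\<close> stays fixed; no relation in the list is insensitive to both moves.\<close>

text \<open>Capping the digit at \<open>\<lfloor>d\<rfloor>\<close> keeps it in the alphabet: for non-integral \<open>d\<close> the
  hypothesis \<open>mu \<ge> \<lceil>d\<rceil> - 1\<close> says exactly \<open>mu \<ge> \<lfloor>d\<rfloor>\<close>.\<close>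

definition greedy_digit :: "real \<Rightarrow> real \<Rightarrow> nat" where
  "greedy_digit d y = min (nat \<lfloor>d\<rfloor>) (nat \<lfloor>d * y\<rfloor>)"

fun greedy_rem :: "real \<Rightarrow> nat \<Rightarrow> real" where
  "greedy_rem d 0 = 1"
| "greedy_rem d (Suc n) = d * greedy_rem d n - real (greedy_digit d (greedy_rem d n))"

fun greedy_digits :: "real \<Rightarrow> nat \<Rightarrow> nat" where
  "greedy_digits d 0 = 0"
| "greedy_digits d (Suc n) = greedy_digit d (greedy_rem d n)"

lemma greedy_digits_le: "greedy_digits d n \<le> nat \<lfloor>d\<rfloor>"
  by (cases n) (auto simp: greedy_digit_def)

lemma greedy_rem_bounds:
  assumes "d > 1"
  shows "0 \<le> greedy_rem d n \<and> greedy_rem d n \<le> of_int \<lfloor>d\<rfloor> / (d - 1)"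
proof (induction n)
  case 0
  have "d - 1 \<le> of_int \<lfloor>d\<rfloor>" by linarith
  then show ?case using assms by (simp add: field_simps)
next
  case (Suc n)
  define y where "y = greedy_rem d n"
  define a where "a = (of_int \<lfloor>d\<rfloor> :: real)"
  have y: "0 \<le> y" "y \<le> a / (d - 1)" using Suc y_def a_def by auto
  have "d - 1 \<le> a" using a_def by linarith
  then have one_le: "1 \<le> a / (d - 1)" using assms by (simp add: field_simps)
  have "0 \<le> d * y" using y assms by simp
  show ?case
  proof (cases "d * y < a")
    case True
    then have "\<lfloor>d * y\<rfloor> \<le> \<lfloor>d\<rfloor>" using a_def by linarith
    then have "real (greedy_digit d y) = of_int \<lfloor>d * y\<rfloor>"
      using \<open>0 \<le> d * y\<close> by (simp add: greedy_digit_def)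
    moreover have "d * y - of_int \<lfloor>d * y\<rfloor> < 1" by linarith
    ultimately show ?thesis using one_le y_def a_def by simp
  next
    case False
    then have "\<lfloor>d\<rfloor> \<le> \<lfloor>d * y\<rfloor>" using a_def by linarith
    then have "real (greedy_digit d y) = a"
      using assms by (simp add: greedy_digit_def a_def)
    moreover have "d * y \<le> a + a / (d - 1)"
    proof -
      have "d * y \<le> d * (a / (d - 1))" using y assms by (intro mult_left_mono) auto
      also have "\<dots> = a + a / (d - 1)" using assms by (simp add: field_simps)
      finally show ?thesis .
    qed
    ultimately show ?thesis using False y_def a_def by simp
  qed
qed

lemma greedy_digits_partial_sum:
  assumes "d > 1"
  shows "(\<Sum>i<Suc n. real (greedy_digits d i) / d ^ i) = 1 - greedy_rem d n / d ^ n"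
proof (induction n)
  case (Suc n)
  then have "(\<Sum>i<Suc (Suc n). real (greedy_digits d i) / d ^ i)
      = 1 - greedy_rem d n / d ^ n + real (greedy_digit d (greedy_rem d n)) / d ^ Suc n"
    by simp
  also have "\<dots> = 1 - greedy_rem d (Suc n) / d ^ Suc n" using assms by (simp add: field_simps)
  finally show ?case .
qed simp

lemma greedy_digits_sums:
  assumes "d > 1"
  shows "(\<lambda>i. real (greedy_digits d i) / d ^ i) sums 1"
proof -
  define C where "C = of_int \<lfloor>d\<rfloor> / (d - 1)"
  have geometric: "(\<lambda>n. C * (1 / d) ^ n) \<longlonglongrightarrow> 0"
    using assms by (intro tendsto_mult_right_zero LIMSEQ_power_zero) auto
  have bounds: "0 \<le> greedy_rem d n / d ^ n \<and> greedy_rem d n / d ^ n \<le> C * (1 / d) ^ n" for n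
  proof -
    have "0 \<le> greedy_rem d n" "greedy_rem d n \<le> C" using greedy_rem_bounds[OF assms] C_def by auto
    then show ?thesis using assms by (simp add: power_one_over divide_right_mono)
  qed
  have "(\<lambda>n. greedy_rem d n / d ^ n) \<longlonglongrightarrow> 0"
    by (rule real_tendsto_sandwich[OF _ _ tendsto_const geometric]) (use bounds in auto)
  then have "(\<lambda>n. \<Sum>i<Suc n. real (greedy_digits d i) / d ^ i) \<longlonglongrightarrow> 1 - 0"
    unfolding greedy_digits_partial_sum[OF assms] by (intro tendsto_diff tendsto_const)
  then have "(\<lambda>n. \<Sum>i<n. real (greedy_digits d i) / d ^ i) \<longlonglongrightarrow> 1"
    unfolding diff_zero by (rule LIMSEQ_imp_Suc)
  then show ?thesis by (simp add: sums_def)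
qed

lemma greedy_rem_rational:
  fixes p q :: int
  assumes "d = of_int p / of_int q" "q > 0" "coprime p q"
  shows "\<exists>N. greedy_rem d n = of_int N / of_int q ^ n \<and> coprime N q"
proof (induction n)
  case 0
  show ?case by (intro exI[of _ 1]) simp
next
  case (Suc n)
  then obtain N where N: "greedy_rem d n = of_int N / of_int q ^ n" "coprime N q" by blast
  define D where "D = int (greedy_digit d (greedy_rem d n))"
  define M where "M = p * N + (- D * q ^ n) * q"
  have "greedy_rem d (Suc n) = d * (of_int N / of_int q ^ n) - of_int D"
    by (simp add: N(1) D_def)
  also have "\<dots> = of_int M / of_int q ^ Suc n"
    using assms(2) unfolding assms(1) M_def by (simp add: field_simps)
  finally have "greedy_rem d (Suc n) = of_int M / of_int q ^ Suc n" .
  moreover have "coprime M q"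
    using N(2) assms(3) unfolding M_def
    by (metis add.commute coprime_commute coprime_iff_gcd_eq_1 coprime_mult_left_iff gcd_add_mult)
  ultimately show ?case by blast
qed

lemma greedy_rem_inj:
  fixes p q :: int
  assumes "d = of_int p / of_int q" "q > 1" "coprime p q" "m < n"
  shows "greedy_rem d m \<noteq> greedy_rem d n"
proof
  assume eq: "greedy_rem d m = greedy_rem d n"
  obtain M N where M: "greedy_rem d m = of_int M / of_int q ^ m"
    and N: "greedy_rem d n = of_int N / of_int q ^ n" "coprime N q"
    using greedy_rem_rational[OF assms(1) _ assms(3)] assms(2) by (metis zero_less_one less_trans)
  have "(of_int q :: real) ^ n = of_int q ^ m * of_int q ^ (n - m)"
    using assms(4) by (simp flip: power_add)
  then have "(of_int N :: real) = of_int (M * q ^ (n - m))"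
    using eq M N(1) assms(2) by (simp add: field_simps)
  then have "q dvd N" using assms(4) by (metis dvd_mult dvd_power of_int_eq_iff zero_less_diff)
  then have "is_unit q" using N(2) by (metis coprime_absorb_left coprime_commute)
  then show False using assms(2) by simp
qed

lemma DS_greedy_digits: "d > 1 \<Longrightarrow> DS (greedy_digits d) d = 1"
  unfolding DS_def using greedy_digits_sums by (rule sums_unique[symmetric])

definition splice :: "nat \<Rightarrow> (nat \<Rightarrow> 'a) \<Rightarrow> (nat \<Rightarrow> 'a) \<Rightarrow> nat \<Rightarrow> 'a" where
  "splice k u v = (\<lambda>i. if i < k then u i else v (i - k))"

lemma splice_prefix_suffix [simp]: "splice k w (\<lambda>i. w (i + k)) = w"
  by (simp add: splice_def fun_eq_iff)

lemma splice_shift [simp]: "splice k u v (i + k) = v i"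
  by (simp add: splice_def)

lemma DS_summable:
  assumes "d > 1" "\<And>i. u i \<le> M"
  shows "summable (\<lambda>i. real (u i) / d ^ i)"
proof (rule summable_comparison_test)
  show "\<exists>N. \<forall>n\<ge>N. norm (real (u n) / d ^ n) \<le> real M * (1 / d) ^ n"
    using assms by (auto simp: power_one_over intro!: divide_right_mono)
  show "summable (\<lambda>i. real M * (1 / d) ^ i)"
    using assms by (intro summable_mult summable_geometric) auto
qed

lemma DS_splice:
  assumes "d > 1" "\<And>i. u i \<le> M" "\<And>i. v i \<le> M"
  shows "DS (splice k u v) d = (\<Sum>i<k. real (u i) / d ^ i) + DS v d / d ^ k"
proof -
  have "summable (\<lambda>i. real (splice k u v i) / d ^ i)"
    using assms by (intro DS_summable[of d _ M]) (auto simp: splice_def)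
  then have "DS (splice k u v) d
      = (\<Sum>i. real (splice k u v (i + k)) / d ^ (i + k)) + (\<Sum>i<k. real (splice k u v i) / d ^ i)"
    unfolding DS_def by (rule suminf_split_initial_segment)
  also have "(\<Sum>i. real (splice k u v (i + k)) / d ^ (i + k)) = (\<Sum>i. real (v i) / d ^ i / d ^ k)"
    by (simp add: power_add)
  also have "\<dots> = DS v d / d ^ k"
    unfolding DS_def by (rule suminf_divide[OF DS_summable[OF assms(1,3)]])
  also have "(\<Sum>i<k. real (splice k u v i) / d ^ i) = (\<Sum>i<k. real (u i) / d ^ i)"
    by (simp add: splice_def)
  finally show ?thesis by simp
qed

lemma DS_unit: "DS (\<lambda>i. if i = 0 then 1 else 0) d = 1"
proof -
  have "(\<lambda>i. real (if i = 0 then 1 else 0) / d ^ i) = (\<lambda>i. if i = 0 then 1 else 0)"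
    by (simp add: fun_eq_iff)
  then show ?thesis unfolding DS_def using sums_single[of 0 "\<lambda>_. 1 :: real"] by (simp add: sums_iff)
qed

lemma DS_greedy_digits_suffix:
  assumes "d > 1"
  shows "DS (\<lambda>i. greedy_digits d (i + Suc n)) d = d * greedy_rem d n"
proof -
  have "1 = DS (splice (Suc n) (greedy_digits d) (\<lambda>i. greedy_digits d (i + Suc n))) d"
    by (simp only: splice_prefix_suffix DS_greedy_digits[OF assms])
  also have "\<dots> = 1 - greedy_rem d n / d ^ n + DS (\<lambda>i. greedy_digits d (i + Suc n)) d / d ^ Suc n"
    by (simp only: DS_splice[OF assms greedy_digits_le greedy_digits_le]
        greedy_digits_partial_sum[OF assms])
  finally show ?thesis using assms by (simp add: field_simps)
qed

lemma DS_greedy_digits_splice: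
  assumes "d > 1"
  shows "DS (splice (Suc m) (greedy_digits d) (\<lambda>i. greedy_digits d (i + Suc n))) d
    = 1 + (greedy_rem d n - greedy_rem d m) / d ^ m"
proof -
  have "DS (splice (Suc m) (greedy_digits d) (\<lambda>i. greedy_digits d (i + Suc n))) d
      = 1 - greedy_rem d m / d ^ m + d * greedy_rem d n / d ^ Suc m"
    by (simp only: DS_splice[OF assms greedy_digits_le greedy_digits_le]
        greedy_digits_partial_sum[OF assms] DS_greedy_digits_suffix[OF assms])
  also have "\<dots> = 1 + (greedy_rem d n - greedy_rem d m) / d ^ m"
    using assms by (simp add: field_simps)
  finally show ?thesis .
qed

lemma INFM_nat_add_iff: "(\<exists>\<^sub>\<infinity>i. P (i + k)) \<longleftrightarrow> (\<exists>\<^sub>\<infinity>i::nat. P i)"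
  using eventually_sequentially_seg[of "\<lambda>i. \<not> P i" k]
  by (simp add: cofinite_eq_sequentially frequently_def)

definition reachable_states :: "(nat \<times> 'a \<times> nat) set \<Rightarrow> nat set \<Rightarrow> nat \<Rightarrow> (nat \<Rightarrow> 'a) \<Rightarrow> nat set"
  where "reachable_states delta I k w =
    {r k | r. r 0 \<in> I \<and> (\<forall>i<k. (r i, w i, r (Suc i)) \<in> delta)}"

lemma reachable_states_subset:
  assumes "I \<subseteq> Q" "delta \<subseteq> Q \<times> Al \<times> Q"
  shows "reachable_states delta I k w \<subseteq> Q"
proof
  fix s assume "s \<in> reachable_states delta I k w"
  then obtain r where r: "r 0 \<in> I" "\<forall>i<k. (r i, w i, r (Suc i)) \<in> delta" "s = r k"
    unfolding reachable_states_def by blast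
  show "s \<in> Q"
  proof (cases k)
    case (Suc j)
    then have "(r j, w j, r k) \<in> delta" using r by auto
    then show ?thesis using r assms by auto
  qed (use r assms in auto)
qed

lemma buchi_accepts_splice_transfer:
  assumes "reachable_states delta I k u = reachable_states delta I k' u'"
    and "buchi_accepts Q Al I delta F (splice k u z)"
  shows "buchi_accepts Q Al I delta F (splice k' u' z)"
proof -
  obtain r where r0: "r 0 \<in> I" and r: "\<And>i. (r i, splice k u z i, r (Suc i)) \<in> delta"
    and rF: "\<exists>\<^sub>\<infinity>i. r i \<in> F"
    using assms(2) unfolding buchi_accepts_def by blast
  have "(r i, u i, r (Suc i)) \<in> delta" if "i < k" for i
    using r[of i] that by (simp add: splice_def)
  then have "r k \<in> reachable_states delta I k u"
    unfolding reachable_states_def using r0 by blast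
  then obtain r' where r'0: "r' 0 \<in> I" and r': "\<And>i. i < k' \<Longrightarrow> (r' i, u' i, r' (Suc i)) \<in> delta"
    and r'k': "r' k' = r k"
    using assms(1) unfolding reachable_states_def by auto
  define r'' where "r'' = splice k' r' (\<lambda>i. r (i + k))"
  have "r'' 0 \<in> I" using r'0 r'k' by (cases k') (auto simp: r''_def splice_def)
  moreover have "(r'' i, splice k' u' z i, r'' (Suc i)) \<in> delta" for i
  proof (cases "i < k'")
    case True
    then have "r'' (Suc i) = r' (Suc i)" using r'k' by (cases "Suc i = k'") (auto simp: r''_def splice_def)
    then show ?thesis using True r' by (simp add: r''_def splice_def)
  next
    case False
    then obtain j where i: "i = j + k'" by (metis add.commute le_add_diff_inverse not_less)
    have "r'' (j + k') = r (j + k)" "r'' (Suc j + k') = r (Suc j + k)"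
      "splice k' u' z (j + k') = splice k u z (j + k)"
      by (simp_all only: r''_def splice_shift)
    then show ?thesis using r[of "j + k"] i by simp
  qed
  moreover have "\<exists>\<^sub>\<infinity>i. r'' i \<in> F"
  proof -
    have "\<exists>\<^sub>\<infinity>i. r (i + k) \<in> F" using rF INFM_nat_add_iff[of "\<lambda>i. r i \<in> F" k] by simp
    then have "\<exists>\<^sub>\<infinity>i. r'' (i + k') \<in> F" by (simp add: r''_def)
    then show ?thesis using INFM_nat_add_iff[of "\<lambda>i. r'' i \<in> F" k'] by simp
  qed
  ultimately show ?thesis unfolding buchi_accepts_def by blast
qed

lemma splice_in_alphabet_iff:
  assumes "\<And>i. w i \<in> Al"
  shows "(\<forall>i. splice k w z i \<in> Al) \<longleftrightarrow> (\<forall>i. z i \<in> Al)"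
proof
  assume "\<forall>i. splice k w z i \<in> Al"
  then show "\<forall>i. z i \<in> Al" by (metis splice_shift)
qed (use assms in \<open>simp add: splice_def\<close>)

lemma omega_regular_prefix_congruence:
  assumes "omega_regular Al L" "\<And>i. w i \<in> Al"
  obtains m n where "m < n" "\<And>z. splice (Suc m) w z \<in> L \<longleftrightarrow> splice (Suc n) w z \<in> L"
proof -
  obtain Q I delta F where aut: "finite Q" "I \<subseteq> Q" "delta \<subseteq> Q \<times> Al \<times> Q"
    and L: "L = {w. (\<forall>i. w i \<in> Al) \<and> buchi_accepts Q Al I delta F w}"
    using assms(1) unfolding omega_regular_def by blast
  define \<rho> where "\<rho> k = reachable_states delta I (Suc k) w" for k
  have "range \<rho> \<subseteq> Pow Q"
    unfolding \<rho>_def using reachable_states_subset[OF aut(2,3)] by auto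
  then have "finite (range \<rho>)"
    using aut(1) by (simp add: finite_subset)
  then have "\<not> inj \<rho>"
    using finite_imageD infinite_UNIV_nat by blast
  then obtain m n where "m < n" "\<rho> m = \<rho> n"
    unfolding inj_def by (metis linorder_neqE_nat)
  then have "buchi_accepts Q Al I delta F (splice (Suc m) w z)
      \<longleftrightarrow> buchi_accepts Q Al I delta F (splice (Suc n) w z)" for z
    unfolding \<rho>_def by (auto intro: buchi_accepts_splice_transfer)
  then show ?thesis
    using that[OF \<open>m < n\<close>] splice_in_alphabet_iff[OF assms(2)] unfolding L by simp
qed

definition greedy_pair_word :: "real \<Rightarrow> nat \<Rightarrow> nat \<times> nat" where
  "greedy_pair_word d i = (if i = 0 then 1 else 0, greedy_digits d i)"

lemma greedy_pair_word_in_alphabet: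
  assumes "d > 1" "nat \<lfloor>d\<rfloor> \<le> mu"
  shows "greedy_pair_word d i \<in> {0..mu} \<times> {0..mu}"
proof -
  have "1 \<le> \<lfloor>d\<rfloor>" using assms(1) by simp
  then have "1 \<le> mu" using assms(2) by arith
  then show ?thesis using assms(2) greedy_digits_le[of d i] by (auto simp: greedy_pair_word_def)
qed

lemma greedy_pair_word_splice_in_DS_comparator:
  assumes "d > 1" "nat \<lfloor>d\<rfloor> \<le> mu"
  shows "splice (Suc m) (greedy_pair_word d) (\<lambda>i. greedy_pair_word d (i + Suc n)) \<in> DS_comparator mu d R
    \<longleftrightarrow> R 1 (1 + (greedy_rem d n - greedy_rem d m) / d ^ m)"
proof -
  let ?w = "splice (Suc m) (greedy_pair_word d) (\<lambda>i. greedy_pair_word d (i + Suc n))"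
  have "fst \<circ> ?w = (\<lambda>i. if i = 0 then 1 else 0)"
    by (auto simp: fun_eq_iff splice_def greedy_pair_word_def)
  then have DS_fst: "DS (fst \<circ> ?w) d = 1" by (simp only: DS_unit)
  have "snd \<circ> ?w = splice (Suc m) (greedy_digits d) (\<lambda>i. greedy_digits d (i + Suc n))"
    by (auto simp: fun_eq_iff splice_def greedy_pair_word_def)
  then have DS_snd: "DS (snd \<circ> ?w) d = 1 + (greedy_rem d n - greedy_rem d m) / d ^ m"
    by (simp only: DS_greedy_digits_splice[OF assms(1)])
  have "\<forall>i. ?w i \<in> {0..mu} \<times> {0..mu}"
    using greedy_pair_word_in_alphabet[OF assms] by (simp add: splice_def)
  then show ?thesis
    unfolding DS_comparator_def mem_Collect_eq DS_fst DS_snd by blast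
qed

lemma comparison_changes_under_opposite_shifts:
  fixes x e e' :: real
  assumes "R \<in> {(\<le>), (<), (\<ge>), (>), (=), (\<noteq>)}" "e * e' < 0"
  shows "R x (x + e) \<noteq> R x x \<or> R x (x + e') \<noteq> R x x"
  using assms by (auto simp: mult_less_0_iff)

lemma non_integer_rational_cases:
  assumes "d \<in> \<rat>" "d \<notin> \<int>"
  obtains p q :: int where "d = of_int p / of_int q" "q > 1" "coprime p q"
proof -
  obtain p q :: int where pq: "q > 0" "coprime p q" "d = of_int p / of_int q"
    using Rats_cases'[OF assms(1)] by blast
  moreover have "q \<noteq> 1" using pq assms(2) by auto
  ultimately show ?thesis using that by simp
qed

theorem theorem7:
  fixes d :: real and mu :: nat and R :: "real \<Rightarrow> real \<Rightarrow> bool"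
  assumes "d \<in> \<rat>" and "d \<notin> \<int>" and "d > 1"
    and "int mu \<ge> \<lceil>d\<rceil> - 1"
    and "R \<in> {(\<le>), (<), (\<ge>), (>), (=), (\<noteq>)}"
  shows "\<not> omega_regular ({0..mu} \<times> {0..mu}) (DS_comparator mu d R)"
proof
  assume regular: "omega_regular ({0..mu} \<times> {0..mu}) (DS_comparator mu d R)"
  obtain p q where pq: "d = of_int p / of_int q" "q > 1" "coprime p q"
    using non_integer_rational_cases[OF assms(1,2)] .
  have "d \<noteq> of_int \<lfloor>d\<rfloor>" using assms(2) by (metis Ints_of_int)
  then have mu: "nat \<lfloor>d\<rfloor> \<le> mu" using assms(4) by (simp add: ceiling_altdef)
  obtain m n where "m < n" and congruent: "\<And>z.
      splice (Suc m) (greedy_pair_word d) z \<in> DS_comparator mu d R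
      \<longleftrightarrow> splice (Suc n) (greedy_pair_word d) z \<in> DS_comparator mu d R"
    using omega_regular_prefix_congruence[OF regular, of "greedy_pair_word d"]
      greedy_pair_word_in_alphabet[OF assms(3) mu] by blast
  let ?x = "greedy_rem d"
  have "R 1 (1 + (?x n - ?x m) / d ^ m) \<longleftrightarrow> R 1 1"
    using congruent[of "\<lambda>i. greedy_pair_word d (i + Suc n)"]
    unfolding greedy_pair_word_splice_in_DS_comparator[OF assms(3) mu] by simp
  moreover have "R 1 1 \<longleftrightarrow> R 1 (1 + (?x m - ?x n) / d ^ n)"
    using congruent[of "\<lambda>i. greedy_pair_word d (i + Suc m)"]
    unfolding greedy_pair_word_splice_in_DS_comparator[OF assms(3) mu] by simp
  moreover have "(?x n - ?x m) / d ^ m * ((?x m - ?x n) / d ^ n) < 0"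
    using greedy_rem_inj[OF pq \<open>m < n\<close>] assms(3)
    by (auto simp: mult_less_0_iff divide_less_0_iff zero_less_divide_iff)
  ultimately show False
    using comparison_changes_under_opposite_shifts[OF assms(5),
        of "(?x n - ?x m) / d ^ m" "(?x m - ?x n) / d ^ n" 1]
    by blast
qed

end
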